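(* Let $G$ be a group and let $\mathrm{Conj}(G)$ be the quandle with underlying set $G$ and operation $x\triangleright y=y^{-1}xy$. Then $\mathrm{Conj}(G)$ is a quasi-trivial quandle if and only if $G$ is a $2$-Engel group, i.e. $x$ commutes with $g^{-1}xg$ for all $x,g\in G$.
   Context: A quandle is a set $X$ with a binary operation $\triangleright$ such that: (i) for all $x,y\in X$ there is a unique $z$ with $y=z\triangleright x$; (ii) $(x\triangleright y)\triangleright z=(x\triangleright z)\triangleright(y\triangleright z)$ for all $x,y,z\in X$; (iii) $x\triangleright x=x$ for all $x\in X$. For $x\in X$ the map $R_x(y)=y\triangleright x$ is a bijection. The inner automorphism group $\mathrm{Inn}(X)$ is the group generated by all $R_x$, and the orbits of $X$ are the orbits of the action of $\mathrm{Inn}(X)$ on $X$. A quandle is quasi-trivial if $x\triangleright y=x$ for all $x,y$ lying in the same orbit. *)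

theory Defs
  imports "HOL-Algebra.Group"
begin

definition quandle :: "'a set \<Rightarrow> ('a \<Rightarrow> 'a \<Rightarrow> 'a) \<Rightarrow> bool" where
  "quandle X qop \<longleftrightarrow>
     (\<forall>x\<in>X. \<forall>y\<in>X. qop x y \<in> X) \<and>
     (\<forall>x\<in>X. \<forall>y\<in>X. \<exists>!z. z \<in> X \<and> y = qop z x) \<and>
     (\<forall>x\<in>X. \<forall>y\<in>X. \<forall>z\<in>X. qop (qop x y) z = qop (qop x z) (qop y z)) \<and>
     (\<forall>x\<in>X. qop x x = x)"

definition rtrans :: "('a \<Rightarrow> 'a \<Rightarrow> 'a) \<Rightarrow> 'a \<Rightarrow> 'a \<Rightarrow> 'a" where
  "rtrans qop x = (\<lambda>y. qop y x)"

text \<open>Elements of the inner automorphism group Inn(X): the group generated by the R_x,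
  i.e. all finite composites of the R_x and their inverses (as maps on X).\<close>
inductive_set inn :: "'a set \<Rightarrow> ('a \<Rightarrow> 'a \<Rightarrow> 'a) \<Rightarrow> ('a \<Rightarrow> 'a) set"
  for X qop where
  inn_id: "(\<lambda>y. y) \<in> inn X qop"
| inn_R: "f \<in> inn X qop \<Longrightarrow> x \<in> X \<Longrightarrow> rtrans qop x \<circ> f \<in> inn X qop"
| inn_Rinv: "f \<in> inn X qop \<Longrightarrow> x \<in> X \<Longrightarrow> inv_into X (rtrans qop x) \<circ> f \<in> inn X qop"

definition quandle_orbit :: "'a set \<Rightarrow> ('a \<Rightarrow> 'a \<Rightarrow> 'a) \<Rightarrow> 'a \<Rightarrow> 'a set" where
  "quandle_orbit X qop x = {f x | f. f \<in> inn X qop}"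

definition quasi_trivial :: "'a set \<Rightarrow> ('a \<Rightarrow> 'a \<Rightarrow> 'a) \<Rightarrow> bool" where
  "quasi_trivial X qop \<longleftrightarrow> quandle X qop \<and>
     (\<forall>x\<in>X. \<forall>y\<in>X. y \<in> quandle_orbit X qop x \<longrightarrow> qop x y = x)"

definition conj_op :: "('a, 'b) monoid_scheme \<Rightarrow> 'a \<Rightarrow> 'a \<Rightarrow> 'a" where
  "conj_op G x y = inv\<^bsub>G\<^esub> y \<otimes>\<^bsub>G\<^esub> x \<otimes>\<^bsub>G\<^esub> y"

definition two_engel :: "('a, 'b) monoid_scheme \<Rightarrow> bool" where
  "two_engel G \<longleftrightarrow> (\<forall>x\<in>carrier G. \<forall>g\<in>carrier G.
     x \<otimes>\<^bsub>G\<^esub> (inv\<^bsub>G\<^esub> g \<otimes>\<^bsub>G\<^esub> x \<otimes>\<^bsub>G\<^esub> g) = (inv\<^bsub>G\<^esub> g \<otimes>\<^bsub>G\<^esub> x \<otimes>\<^bsub>G\<^esub> g) \<otimes>\<^bsub>G\<^esub> x)"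

end

theory Submission
  imports Defs
begin

text \<open>Every element of Inn(Conj G) sends each element to one of its conjugates, and every
  conjugation is a right translation, so the orbit of \<open>x\<close> in Conj(G) is its
  conjugacy class. In Conj(G) one has \<open>x \<triangleright> y = x\<close> iff \<open>x\<close> and \<open>y\<close> commute, hence
  quasi-triviality says exactly that \<open>x\<close> commutes with all its conjugates.\<close>

context group begin

lemma conj_op_closed [simp]:
  "x \<in> carrier G \<Longrightarrow> y \<in> carrier G \<Longrightarrow> conj_op G x y \<in> carrier G"
  by (simp add: conj_op_def)

lemma conj_op_one: "x \<in> carrier G \<Longrightarrow> conj_op G x \<one> = x"
  by (simp add: conj_op_def)

lemma conj_op_idem: "x \<in> carrier G \<Longrightarrow> conj_op G x x = x"
  by (simp add: conj_op_def)

lemma conj_op_conj_op: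
  assumes "x \<in> carrier G" "g \<in> carrier G" "h \<in> carrier G"
  shows "conj_op G (conj_op G x g) h = conj_op G x (g \<otimes> h)"
  using assms by (simp add: conj_op_def inv_mult_group m_assoc)

lemma conj_op_inv_cancel:
  assumes "x \<in> carrier G" "g \<in> carrier G"
  shows "conj_op G (conj_op G x (inv g)) g = x"
  using assms by (simp add: conj_op_conj_op conj_op_one)

lemma conj_op_cancel_right:
  assumes "x \<in> carrier G" "g \<in> carrier G"
  shows "conj_op G (conj_op G x g) (inv g) = x"
  using conj_op_inv_cancel[of x "inv g"] assms by simp

lemma mult_conj_op:
  assumes "x \<in> carrier G" "g \<in> carrier G"
  shows "g \<otimes> conj_op G x g = x \<otimes> g"
  using assms by (simp add: conj_op_def m_assoc flip: m_assoc[of g "inv g"])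

text \<open>Both sides are conjugation by \<open>y \<otimes> z\<close>, since \<open>z \<otimes> conj_op G y z = y \<otimes> z\<close>.\<close>

lemma conj_op_self_distrib:
  assumes "x \<in> carrier G" "y \<in> carrier G" "z \<in> carrier G"
  shows "conj_op G (conj_op G x y) z = conj_op G (conj_op G x z) (conj_op G y z)"
  using assms by (simp add: conj_op_conj_op mult_conj_op)

lemma conj_op_fixed_iff_commute:
  assumes x: "x \<in> carrier G" and y: "y \<in> carrier G"
  shows "conj_op G x y = x \<longleftrightarrow> x \<otimes> y = y \<otimes> x"
proof -
  have "conj_op G x y = x \<longleftrightarrow> y \<otimes> conj_op G x y = y \<otimes> x"
    using x y by simp
  then show ?thesis
    using x y by (simp add: mult_conj_op eq_commute)
qed

lemma quandle_conj: "quandle (carrier G) (conj_op G)"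
proof -
  have "\<exists>!z. z \<in> carrier G \<and> y = conj_op G z x"
    if x: "x \<in> carrier G" and y: "y \<in> carrier G" for x y
  proof (rule ex1I[of _ "conj_op G y (inv x)"])
    show "conj_op G y (inv x) \<in> carrier G \<and> y = conj_op G (conj_op G y (inv x)) x"
      using x y by (simp add: conj_op_inv_cancel)
  next
    fix z assume "z \<in> carrier G \<and> y = conj_op G z x"
    then show "z = conj_op G y (inv x)"
      using x by (simp add: conj_op_cancel_right)
  qed
  then show ?thesis
    unfolding quandle_def
    by (intro conjI ballI conj_op_closed conj_op_self_distrib conj_op_idem)
qed

lemma inv_into_rtrans_conj:
  assumes g: "g \<in> carrier G" and w: "w \<in> carrier G"
  shows "inv_into (carrier G) (rtrans (conj_op G) g) w = conj_op G w (inv g)"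
proof (rule inv_into_f_eq)
  show "inj_on (rtrans (conj_op G) g) (carrier G)"
    using g by (intro inj_on_inverseI[where g = "\<lambda>w. conj_op G w (inv g)"])
      (simp add: rtrans_def conj_op_cancel_right)
qed (use g w in \<open>simp_all add: rtrans_def conj_op_inv_cancel\<close>)

lemma inn_conj_acts_by_conjugation:
  assumes "f \<in> inn (carrier G) (conj_op G)" and "x \<in> carrier G"
  shows "\<exists>h\<in>carrier G. f x = conj_op G x h"
  using assms
proof induction
  case inn_id
  then show ?case by (metis one_closed conj_op_one)
next
  case (inn_R f g)
  then obtain h where "h \<in> carrier G" "f x = conj_op G x h" by blast
  with inn_R.hyps(2) inn_R.prems show ?case
    by (auto simp: rtrans_def conj_op_conj_op)
next
  case (inn_Rinv f g)
  then obtain h where "h \<in> carrier G" "f x = conj_op G x h" by blast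
  with inn_Rinv.hyps(2) inn_Rinv.prems show ?case
    by (auto simp: inv_into_rtrans_conj conj_op_conj_op)
qed

lemma quandle_orbit_conj:
  assumes "x \<in> carrier G"
  shows "quandle_orbit (carrier G) (conj_op G) x = {conj_op G x h | h. h \<in> carrier G}"
proof
  show "quandle_orbit (carrier G) (conj_op G) x \<subseteq> {conj_op G x h | h. h \<in> carrier G}"
    using inn_conj_acts_by_conjugation assms by (fastforce simp: quandle_orbit_def)
next
  have "conj_op G x h \<in> quandle_orbit (carrier G) (conj_op G) x" if "h \<in> carrier G" for h
  proof -
    have "rtrans (conj_op G) h \<circ> (\<lambda>y. y) \<in> inn (carrier G) (conj_op G)"
      using that by (intro inn.inn_R inn.inn_id)
    moreover have "conj_op G x h = (rtrans (conj_op G) h \<circ> (\<lambda>y. y)) x"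
      by (simp add: rtrans_def)
    ultimately show ?thesis
      unfolding quandle_orbit_def by blast
  qed
  then show "{conj_op G x h | h. h \<in> carrier G} \<subseteq> quandle_orbit (carrier G) (conj_op G) x"
    by blast
qed

end

theorem mainTheorem8:
  fixes G :: "('a, 'b) monoid_scheme"
  assumes "group G"
  shows "quasi_trivial (carrier G) (conj_op G) \<longleftrightarrow> two_engel G"
proof -
  interpret group G by (fact assms)
  have "quasi_trivial (carrier G) (conj_op G) \<longleftrightarrow>
      (\<forall>x\<in>carrier G. \<forall>g\<in>carrier G. conj_op G x (conj_op G x g) = x)"
    unfolding quasi_trivial_def using quandle_conj by (auto simp: quandle_orbit_conj intro: conj_op_closed)
  also have "\<dots> \<longleftrightarrow> two_engel G"
    unfolding two_engel_def
    by (simp add: conj_op_fixed_iff_commute) (simp add: conj_op_def)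
  finally show ?thesis .
qed

end
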